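(* Let $c>0$ be a real number which is not an integer. Then there exists a constant $L>0$ such that for all pairs of distinct primes $p,q>L$ we have $(p/q)^c\notin\mathbb Q$. *)

theory Defs
  imports Complex_Main "HOL-Computational_Algebra.Primes"
begin

end

(*
  Rational exponent c = a/b in lowest terms, b > 1: from (p/q)^c = m/n we get
  m^b q^a = p^a n^b, and comparing multiplicities of p gives b | a.

  Irrational exponent: if the claim failed, we could choose primes Q_0 < P_0 < Q_1 < P_1 < Q_2 < P_2
  with every (P_j/Q_j)^c rational. By unique factorisation the numbers y_j = ln (P_j/Q_j) are
  linearly independent over the rationals, while the six numbers exp y_j and exp (c y_j) are
  rational. This contradicts the six exponentials theorem, whose rational case yields to the
  auxiliary function method. Siegel's lemma gives integers a_kl, not all zero, such that
  F z = (sum over k, l < 2 n^3 of a_kl exp ((k + l c) z)) vanishes at the n^6 lattice points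
  sum_j s_j y_j with s_j < n^2. The values of the exponentials at lattice points are rationals of
  controlled height, so an interpolation estimate (Rolle's theorem) together with the integrality
  of a multiple of F extends the vanishing to the 8 n^6 points with s_j < 2 n^2. Since k + l c
  takes 4 n^6 distinct values, Rolle's theorem again shows that F has fewer than 4 n^6 zeros.
*)

theory Submission
  imports Defs "HOL-Computational_Algebra.Polynomial" "HOL-Library.FuncSet" "HOL-Real_Asymp.Real_Asymp"
begin

lemma power_div_fact_le_exp:
  fixes x :: real
  assumes "0 \<le> x"
  shows "x ^ n / fact n \<le> exp x"
proof -
  have s: "(\<lambda>n. x ^ n /\<^sub>R fact n) sums exp x"
    by (rule exp_converges)
  have "(\<Sum>i\<in>{n}. x ^ i /\<^sub>R fact i) \<le> (\<Sum>i. x ^ i /\<^sub>R fact i)"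
    by (rule sum_le_suminf) (use s assms in \<open>auto simp: sums_iff\<close>)
  then show ?thesis
    using s by (simp add: sums_iff divide_inverse mult.commute)
qed

lemma power_div_fact_le:
  fixes x :: real
  assumes "0 \<le> x" "0 < M"
  shows "x ^ M / fact M \<le> (exp 1 * x / M) ^ M"
proof -
  have "x ^ M / fact M = (x / M) ^ M * (real M ^ M / fact M)"
    using assms by (simp add: power_divide)
  also have "\<dots> \<le> (x / M) ^ M * exp (real M)"
    using assms power_div_fact_le_exp[of "real M" M] by (intro mult_left_mono) auto
  also have "exp (real M) = exp 1 ^ M"
    using exp_of_nat_mult[of M 1] by simp
  also have "(x / M) ^ M * exp 1 ^ M = (exp 1 * x / M) ^ M"
    by (simp add: power_mult_distrib power_divide)
  finally show ?thesis .
qed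

lemma Rolle_has_real_derivative:
  fixes f f' :: "real \<Rightarrow> real"
  assumes der: "\<And>x. (f has_real_derivative f' x) (at x)" and "a < b" "f a = f b"
  obtains \<xi> where "a < \<xi>" "\<xi> < b" "f' \<xi> = 0"
proof -
  have "continuous_on {a..b} f"
    by (meson DERIV_isCont continuous_at_imp_continuous_on der)
  moreover have "\<And>x. f differentiable (at x)"
    using der real_differentiable_def by blast
  ultimately obtain \<xi> where "a < \<xi>" "\<xi> < b" "(f has_real_derivative 0) (at \<xi>)"
    using Rolle[OF \<open>a < b\<close> \<open>f a = f b\<close>] by metis
  then show thesis
    using that DERIV_unique[OF der] by blast
qed

lemma Rolle_card_zeros:
  fixes f f' :: "real \<Rightarrow> real"
  assumes der: "\<And>x. (f has_real_derivative f' x) (at x)"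
    and "finite Z" and "\<forall>z\<in>Z. f z = 0"
  shows "\<exists>Z'. finite Z' \<and> Z' \<subseteq> {Min Z<..<Max Z} \<and> (\<forall>z\<in>Z'. f' z = 0) \<and> card Z \<le> card Z' + 1"
  using assms(2,3)
proof (induction Z rule: finite_linorder_max_induct)
  case empty
  then show ?case
    by (intro exI[of _ "{}"]) auto
next
  case (insert b A)
  show ?case
  proof (cases "A = {}")
    case True
    then show ?thesis
      by (intro exI[of _ "{}"]) auto
  next
    case False
    have "\<forall>z\<in>A. f z = 0"
      using insert.prems by simp
    then obtain A' where A': "finite A'" "A' \<subseteq> {Min A<..<Max A}" "\<forall>z\<in>A'. f' z = 0" "card A \<le> card A' + 1"
      using insert.IH by blast
    have "Min A \<in> A" "Max A \<in> A"
      using insert.hyps(1) False by simp_all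
    then have "Min A < b" "Max A < b" "f (Max A) = f b"
      using insert.hyps(2) insert.prems by auto
    then obtain \<xi> where \<xi>: "Max A < \<xi>" "\<xi> < b" "f' \<xi> = 0"
      using Rolle_has_real_derivative[OF der] by metis
    have "Min (insert b A) = Min A" "Max (insert b A) = b" "card (insert b A) = card A + 1"
      using insert.hyps False \<open>Min A < b\<close> \<open>Max A < b\<close> by auto
    moreover have "Min A \<le> Max A" "\<xi> \<notin> A'"
      using \<open>Min A \<in> A\<close> insert.hyps(1) A'(2) \<xi>(1) by auto
    ultimately show ?thesis
      using A' \<xi> by (intro exI[of _ "insert \<xi> A'"]) auto
  qed
qed

lemma Rolle_card_zeros_higher:
  fixes f :: "nat \<Rightarrow> real \<Rightarrow> real"
  assumes der: "\<And>i x. (f i has_real_derivative f (Suc i) x) (at x)"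
    and Z: "finite Z" "Z \<subseteq> {a..b}" "\<forall>z\<in>Z. f 0 z = 0"
  shows "\<exists>Z'. finite Z' \<and> Z' \<subseteq> {a..b} \<and> (\<forall>z\<in>Z'. f m z = 0) \<and> card Z \<le> card Z' + m"
proof (induction m)
  case 0
  then show ?case
    using Z by auto
next
  case (Suc m)
  then obtain Z' where Z': "finite Z'" "Z' \<subseteq> {a..b}" "\<forall>z\<in>Z'. f m z = 0" "card Z \<le> card Z' + m"
    by auto
  show ?case
  proof (cases "Z' = {}")
    case True
    then show ?thesis
      using Z'(4) by (intro exI[of _ "{}"]) auto
  next
    case False
    obtain Z'' where Z'': "finite Z''" "Z'' \<subseteq> {Min Z'<..<Max Z'}" "\<forall>z\<in>Z''. f (Suc m) z = 0"
      "card Z' \<le> card Z'' + 1"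
      using Rolle_card_zeros[OF der Z'(1,3)] by blast
    have "{Min Z'<..<Max Z'} \<subseteq> {a..b}"
      using Z'(1,2) False Min_in Max_in by fastforce
    then show ?thesis
      using Z'' Z'(4) by (intro exI[of _ Z'']) auto
  qed
qed

lemma exp_sum_zeros_shift_deriv:
  fixes a lam :: "'i \<Rightarrow> real"
  assumes "finite I" "i0 \<in> I" "finite Z" "\<forall>z\<in>Z. (\<Sum>i\<in>I. a i * exp (lam i * z)) = 0"
  obtains Z' where "finite Z'" "card Z \<le> card Z' + 1"
    "\<forall>z\<in>Z'. (\<Sum>i\<in>I - {i0}. a i * (lam i - lam i0) * exp ((lam i - lam i0) * z)) = 0"
proof -
  define g where "g z = (\<Sum>i\<in>I. a i * exp ((lam i - lam i0) * z))" for z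
  define g' where "g' z = (\<Sum>i\<in>I - {i0}. a i * (lam i - lam i0) * exp ((lam i - lam i0) * z))" for z
  have "(g has_real_derivative g' z) (at z)" for z
  proof -
    have "(g has_real_derivative (\<Sum>i\<in>I. a i * (lam i - lam i0) * exp ((lam i - lam i0) * z))) (at z)"
      unfolding g_def by (auto intro!: derivative_eq_intros simp: algebra_simps)
    then show ?thesis
      using assms(1,2) by (simp add: g'_def sum.remove)
  qed
  moreover have "\<forall>z\<in>Z. g z = 0"
  proof
    fix z assume "z \<in> Z"
    have "g z = exp (- lam i0 * z) * (\<Sum>i\<in>I. a i * exp (lam i * z))"
      unfolding g_def sum_distrib_left
      by (rule sum.cong) (auto simp: algebra_simps simp flip: exp_add)
    then show "g z = 0"
      using assms(4) \<open>z \<in> Z\<close> by simp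
  qed
  ultimately show thesis
    using Rolle_card_zeros[of g g' Z] assms(3) that unfolding g'_def by blast
qed

lemma card_zeros_exp_sum_less:
  fixes a lam :: "'i \<Rightarrow> real"
  assumes "finite I" "inj_on lam I" "\<exists>i\<in>I. a i \<noteq> 0"
    and "finite Z" "\<forall>z\<in>Z. (\<Sum>i\<in>I. a i * exp (lam i * z)) = 0"
  shows "card Z < card I"
  using assms
proof (induction I arbitrary: a lam Z rule: finite_induct)
  case empty
  then show ?case
    by simp
next
  case (insert i0 I)
  show ?case
  proof (cases "\<forall>i\<in>I. a i = 0")
    case True
    then have "Z = {}"
      using insert.hyps insert.prems(2,4) by auto
    then show ?thesis
      using insert.hyps(1) by (simp add: card_gt_0_iff)
  next
    case False
    then obtain i where "i \<in> I" "a i \<noteq> 0"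
      by blast
    moreover have "i \<noteq> i0"
      using insert.hyps(2) \<open>i \<in> I\<close> by blast
    then have "lam i \<noteq> lam i0"
      by (rule inj_on_contraD[OF insert.prems(1)]) (use \<open>i \<in> I\<close> in auto)
    ultimately have "\<exists>i\<in>I. a i * (lam i - lam i0) \<noteq> 0"
      by auto
    moreover have "inj_on (\<lambda>i. lam i - lam i0) I"
      using insert.prems(1) by (auto simp: inj_on_def)
    moreover obtain Z' where "finite Z'" "card Z \<le> card Z' + 1"
      "\<forall>z\<in>Z'. (\<Sum>i\<in>I. a i * (lam i - lam i0) * exp ((lam i - lam i0) * z)) = 0"
      using exp_sum_zeros_shift_deriv[OF _ insertI1 insert.prems(3,4)] insert.hyps by auto
    ultimately have "card Z' < card I"
      using insert.IH[of "\<lambda>i. lam i - lam i0" "\<lambda>i. a i * (lam i - lam i0)" Z'] by blast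
    then show ?thesis
      using \<open>card Z \<le> card Z' + 1\<close> insert.hyps by simp
  qed
qed

lemma higher_pderiv_degree_le:
  fixes p :: "'a :: {idom, semiring_char_0} poly"
  assumes "degree p \<le> n"
  shows "(pderiv ^^ n) p = [:fact n * coeff p n:]"
proof -
  have "degree ((pderiv ^^ n) p) = 0"
    using assms by (simp add: degree_higher_pderiv)
  then have "(pderiv ^^ n) p = [:coeff ((pderiv ^^ n) p) 0:]"
    by (rule degree_0_id[symmetric])
  also have "coeff ((pderiv ^^ n) p) 0 = fact n * coeff p n"
    by (simp add: coeff_higher_pderiv pochhammer_fact)
  finally show ?thesis .
qed

lemma interpolation_remainder:
  fixes f :: "nat \<Rightarrow> real \<Rightarrow> real"
  assumes der: "\<And>i x. (f i has_real_derivative f (Suc i) x) (at x)"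
    and Z: "finite Z" "Z \<subseteq> {a..b}" "\<forall>z\<in>Z. f 0 z = 0" "card Z = M" and x: "x \<in> {a..b}"
  obtains \<xi> where "\<xi> \<in> {a..b}" "f 0 x = f M \<xi> * (\<Prod>z\<in>Z. x - z) / fact M"
proof (cases "x \<in> Z")
  case True
  then show thesis
    using that[of x] x Z(1,3) by simp
next
  case False
  define P where "P = (\<Prod>z\<in>Z. [:-z, 1:])"
  have poly_P: "poly P t = (\<Prod>z\<in>Z. t - z)" for t
    by (simp add: P_def poly_prod)
  have "degree P = M" "coeff P M = 1"
    using Z(1,4) lead_coeff_prod[of "\<lambda>z. [:-z, 1:]" Z]
    by (simp_all add: P_def degree_prod_eq_sum_degree)
  then have pderiv_P: "(pderiv ^^ M) P = [:fact M:]"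
    by (simp add: higher_pderiv_degree_le)
  have "poly P x \<noteq> 0"
    using False Z(1) by (simp add: poly_P)
  define C where "C = f 0 x / poly P x"
  define g where "g i t = f i t - C * poly ((pderiv ^^ i) P) t" for i t
  have "(g i has_real_derivative g (Suc i) t) (at t)" for i t
    unfolding g_def by (auto intro!: derivative_eq_intros der)
  moreover have "\<forall>z\<in>insert x Z. g 0 z = 0"
    using \<open>poly P x \<noteq> 0\<close> Z(1,3) by (auto simp: g_def C_def poly_P)
  ultimately obtain Z' where Z': "Z' \<subseteq> {a..b}" "\<forall>z\<in>Z'. g M z = 0" "card (insert x Z) \<le> card Z' + M"
    using Rolle_card_zeros_higher[of g "insert x Z" a b M] Z x by auto
  moreover have "card (insert x Z) = M + 1"
    using False Z by simp
  ultimately have "Z' \<noteq> {}"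
    by auto
  then obtain \<xi> where "\<xi> \<in> {a..b}" "g M \<xi> = 0"
    using Z'(1,2) by blast
  then have "f M \<xi> = C * fact M"
    by (simp add: g_def pderiv_P)
  then show thesis
    using that[of \<xi>] \<open>\<xi> \<in> {a..b}\<close> \<open>poly P x \<noteq> 0\<close> by (simp add: C_def poly_P field_simps)
qed

lemma interpolation_error_bound:
  fixes f :: "nat \<Rightarrow> real \<Rightarrow> real"
  assumes der: "\<And>i x. (f i has_real_derivative f (Suc i) x) (at x)"
    and Z: "finite Z" "Z \<subseteq> {a..b}" "\<forall>z\<in>Z. f 0 z = 0" "card Z = M"
    and bound: "\<forall>t\<in>{a..b}. \<bar>f M t\<bar> \<le> B" and x: "x \<in> {a..b}"
  shows "\<bar>f 0 x\<bar> \<le> (b - a) ^ M / fact M * B"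
proof -
  obtain \<xi> where "\<xi> \<in> {a..b}" and remainder: "f 0 x = f M \<xi> * (\<Prod>z\<in>Z. x - z) / fact M"
    using interpolation_remainder[OF der Z x] .
  have "(\<Prod>z\<in>Z. \<bar>x - z\<bar>) \<le> (\<Prod>z\<in>Z. b - a)"
    by (rule prod_mono) (use Z x in \<open>force simp: abs_le_iff subset_iff\<close>)
  then have "\<bar>\<Prod>z\<in>Z. x - z\<bar> \<le> (b - a) ^ M"
    using Z by (simp add: abs_prod)
  moreover have "\<bar>f M \<xi>\<bar> \<le> B"
    using bound \<open>\<xi> \<in> {a..b}\<close> by auto
  ultimately have "\<bar>f M \<xi>\<bar> * \<bar>\<Prod>z\<in>Z. x - z\<bar> \<le> B * (b - a) ^ M"
    by (meson abs_ge_zero mult_mono' order_trans)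
  then show ?thesis
    unfolding remainder by (simp add: abs_mult field_simps)
qed

lemma card_int_boxes_less:
  fixes X Y :: nat
  assumes "finite I" "finite J" "1 \<le> card I" "2 * card J \<le> card I" "1 \<le> X" "2 * Y = X * X"
  shows "card (J \<rightarrow>\<^sub>E {- int Y..int Y}) < card (I \<rightarrow>\<^sub>E {0..int X})"
proof -
  have "int Y - - int Y + 1 = int (X * X + 1)" "int X - 0 + 1 = int (X + 1)"
    using arg_cong[OF assms(6), of int] by simp_all
  then have "card {- int Y..int Y} = X * X + 1" "card {0..int X} = X + 1"
    by (simp_all only: card_atLeastAtMost_int nat_int)
  then have card_boxes: "card (J \<rightarrow>\<^sub>E {- int Y..int Y}) = (X * X + 1) ^ card J"
    "card (I \<rightarrow>\<^sub>E {0..int X}) = (X + 1) ^ card I"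
    using assms(1,2) by (simp_all add: card_PiE)
  have "(X * X + 1) ^ card J \<le> ((X + 1) ^ 2) ^ card J"
    by (intro power_mono) (simp_all add: power2_eq_square algebra_simps)
  also have "\<dots> = (X + 1) ^ (2 * card J)"
    by (simp add: power_mult)
  finally have "(X * X + 1) ^ card J \<le> (X + 1) ^ (2 * card J)" .
  moreover have "(X * X + 1) ^ card J < (X + 1) ^ (2 * card J)" if "0 < card J"
  proof -
    have "(X * X + 1) ^ card J < ((X + 1) ^ 2) ^ card J"
      using that assms(5) by (intro power_strict_mono) (simp_all add: power2_eq_square algebra_simps)
    then show ?thesis
      by (simp add: power_mult)
  qed
  moreover have "(X + 1) ^ (2 * card J) \<le> (X + 1) ^ card I"
    "(X + 1) ^ (2 * card J) < (X + 1) ^ card I" if "2 * card J < card I"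
    using assms(4,5) that by (simp_all add: power_increasing power_strict_increasing)
  ultimately show ?thesis
    unfolding card_boxes using assms(3,4) by (cases "2 * card J < card I") fastforce+
qed

lemma abs_sum_mult_le:
  fixes b x :: "'i \<Rightarrow> 'a :: linordered_idom"
  assumes "\<forall>i\<in>I. \<bar>b i\<bar> \<le> B" "\<forall>i\<in>I. \<bar>x i\<bar> \<le> X"
  shows "\<bar>\<Sum>i\<in>I. b i * x i\<bar> \<le> of_nat (card I) * B * X"
proof -
  have "\<bar>\<Sum>i\<in>I. b i * x i\<bar> \<le> (\<Sum>i\<in>I. B * X)"
  proof (rule order_trans[OF sum_abs sum_mono])
    fix i assume "i \<in> I"
    then show "\<bar>b i * x i\<bar> \<le> B * X"
      using assms by (simp add: abs_mult mult_mono')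
  qed
  then show ?thesis
    by (simp add: mult.assoc)
qed

lemma siegel_lemma:
  fixes b :: "'j \<Rightarrow> 'i \<Rightarrow> int" and B :: nat
  assumes I: "finite I" "I \<noteq> {}" and J: "finite J" and IJ: "2 * card J \<le> card I"
    and bB: "\<forall>j\<in>J. \<forall>i\<in>I. \<bar>b j i\<bar> \<le> int B" and "1 \<le> B"
  shows "\<exists>x. (\<exists>i\<in>I. x i \<noteq> 0) \<and> (\<forall>i\<in>I. \<bar>x i\<bar> \<le> int (2 * card I * B)) \<and>
             (\<forall>j\<in>J. (\<Sum>i\<in>I. b j i * x i) = 0)"
proof -
  define X where "X = 2 * card I * B"
  define Y where "Y = card I * B * X"
  define D where "D = I \<rightarrow>\<^sub>E {0..int X}"
  define T where "T = J \<rightarrow>\<^sub>E {- int Y..int Y}"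
  define \<phi> where "\<phi> x = restrict (\<lambda>j. \<Sum>i\<in>I. b j i * x i) J" for x
  have "1 \<le> card I"
    using I by (simp add: Suc_le_eq card_gt_0_iff)
  then have "1 \<le> X"
    using \<open>1 \<le> B\<close> by (simp add: X_def)
  have "\<phi> ` D \<subseteq> T"
  proof (clarsimp simp: T_def \<phi>_def)
    fix x j assume "x \<in> D" "j \<in> J"
    then have "\<bar>\<Sum>i\<in>I. b j i * x i\<bar> \<le> int Y"
      using bB abs_sum_mult_le[of I "b j" "int B" x "int X"] by (auto simp: D_def PiE_iff Y_def)
    then show "- int Y \<le> (\<Sum>i\<in>I. b j i * x i) \<and> (\<Sum>i\<in>I. b j i * x i) \<le> int Y"
      by (simp add: abs_le_iff)
  qed
  moreover have "card T < card D"
    unfolding T_def D_def using I J IJ \<open>1 \<le> card I\<close> \<open>1 \<le> X\<close>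
    by (intro card_int_boxes_less) (simp_all add: X_def Y_def)
  ultimately have "\<not> inj_on \<phi> D"
    using card_inj_on_le[of \<phi> D T] J by (auto simp: T_def intro!: finite_PiE)
  then obtain x y where xy: "x \<in> D" "y \<in> D" "x \<noteq> y" "\<phi> x = \<phi> y"
    by (auto simp: inj_on_def)
  show ?thesis
  proof (intro exI[of _ "\<lambda>i. x i - y i"] conjI ballI)
    show "\<exists>i\<in>I. x i - y i \<noteq> 0"
      using xy(1-3) unfolding D_def by (metis PiE_ext right_minus_eq)
  next
    fix i assume "i \<in> I"
    then show "\<bar>x i - y i\<bar> \<le> int (2 * card I * B)"
      using xy(1,2) unfolding D_def PiE_iff X_def by (force simp: abs_le_iff)
  next
    fix j assume "j \<in> J"
    then have "(\<Sum>i\<in>I. b j i * x i) = (\<Sum>i\<in>I. b j i * y i)"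
      using fun_cong[OF xy(4), of j] by (simp add: \<phi>_def)
    then show "(\<Sum>i\<in>I. b j i * (x i - y i)) = 0"
      by (simp add: right_diff_distrib sum_subtractf)
  qed
qed

definition exp_values_height_le :: "('q \<Rightarrow> real) \<Rightarrow> 'q set \<Rightarrow> real \<Rightarrow> nat \<Rightarrow> bool" where
  "exp_values_height_le lam I t D \<longleftrightarrow>
     (\<exists>d::nat. 0 < d \<and> d \<le> D \<and> (\<forall>q\<in>I. \<exists>b::nat. b \<le> D \<and> real d * exp (lam q * t) = real b))"

lemma exists_int_exp_sum_vanishing:
  fixes lam :: "'q \<Rightarrow> real" and T :: "real set"
  assumes "finite I" "I \<noteq> {}" "finite T" "2 * card T \<le> card I" "1 \<le> D"
    and height: "\<forall>t\<in>T. exp_values_height_le lam I t D"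
  obtains a :: "'q \<Rightarrow> int"
  where "\<exists>q\<in>I. a q \<noteq> 0" "\<forall>q\<in>I. \<bar>a q\<bar> \<le> int (2 * card I * D)"
    "\<forall>t\<in>T. (\<Sum>q\<in>I. a q * exp (lam q * t)) = 0"
proof -
  obtain d num where dn: "\<And>t. t \<in> T \<Longrightarrow> 0 < d t \<and>
      (\<forall>q\<in>I. num t q \<le> D \<and> real (d t) * exp (lam q * t) = real (num t q))"
    using height unfolding exp_values_height_le_def by metis
  obtain a where a: "\<exists>q\<in>I. a q \<noteq> 0" "\<forall>q\<in>I. \<bar>a q\<bar> \<le> int (2 * card I * D)"
    "\<forall>t\<in>T. (\<Sum>q\<in>I. int (num t q) * a q) = 0"
    using siegel_lemma[of I T "\<lambda>t q. int (num t q)" D] assms dn by auto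
  have "(\<Sum>q\<in>I. a q * exp (lam q * t)) = 0" if "t \<in> T" for t
  proof -
    have "real (d t) * (\<Sum>q\<in>I. a q * exp (lam q * t)) = real_of_int (\<Sum>q\<in>I. int (num t q) * a q)"
      using dn[OF that] by (simp add: sum_distrib_left mult_ac)
    then show ?thesis
      using a(3) dn[OF that] that by auto
  qed
  then show thesis
    using that a(1,2) by blast
qed

lemma abs_exp_sum_le:
  fixes a lam :: "'q \<Rightarrow> real" and A W R s :: real
  assumes a: "\<forall>q\<in>I. \<bar>a q\<bar> \<le> A" and lam: "\<forall>q\<in>I. 0 \<le> lam q \<and> lam q \<le> W" and s: "s \<in> {0..R}"
  shows "\<bar>\<Sum>q\<in>I. a q * lam q ^ M * exp (lam q * s)\<bar> \<le> card I * A * W ^ M * exp (W * R)"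
proof -
  have "\<bar>\<Sum>q\<in>I. a q * lam q ^ M * exp (lam q * s)\<bar> \<le> (\<Sum>q\<in>I. \<bar>a q\<bar> * lam q ^ M * exp (lam q * s))"
    using lam by (auto intro: order_trans[OF sum_abs] simp: abs_mult)
  also have "\<dots> \<le> (\<Sum>q\<in>I. A * W ^ M * exp (W * R))"
  proof (rule sum_mono)
    fix q assume "q \<in> I"
    then have "\<bar>a q\<bar> \<le> A" "0 \<le> lam q" "lam q \<le> W"
      using a lam by auto
    moreover have "lam q * s \<le> W * R"
      using s calculation by (intro mult_mono) auto
    ultimately show "\<bar>a q\<bar> * lam q ^ M * exp (lam q * s) \<le> A * W ^ M * exp (W * R)"
      by (intro mult_mono power_mono) auto
  qed
  finally show ?thesis
    by simp
qed

lemma exp_sum_zero_extrapolation: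
  fixes a :: "'q \<Rightarrow> int" and lam :: "'q \<Rightarrow> real" and A W R :: real
  assumes "finite I"
    and a: "\<forall>q\<in>I. \<bar>a q\<bar> \<le> A"
    and lam: "\<forall>q\<in>I. 0 \<le> lam q \<and> lam q \<le> W"
    and Z: "finite Z" "Z \<subseteq> {0..R}" "card Z = M" "\<forall>z\<in>Z. (\<Sum>q\<in>I. a q * exp (lam q * z)) = 0"
    and t: "t \<in> {0..R}" "exp_values_height_le lam I t D"
    and small: "D * (R ^ M / fact M * (card I * A * W ^ M * exp (W * R))) < 1"
  shows "(\<Sum>q\<in>I. a q * exp (lam q * t)) = 0"
proof -
  define f where "f i x = (\<Sum>q\<in>I. a q * lam q ^ i * exp (lam q * x))" for i x
  have "(f i has_real_derivative f (Suc i) x) (at x)" for i x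
    unfolding f_def by (auto intro!: derivative_eq_intros simp: algebra_simps)
  moreover have "\<forall>s\<in>{0..R}. \<bar>f M s\<bar> \<le> card I * A * W ^ M * exp (W * R)"
    unfolding f_def using abs_exp_sum_le[of I "\<lambda>q. real_of_int (a q)" A lam W _ R M] a lam by simp
  moreover have "\<forall>z\<in>Z. f 0 z = 0"
    using Z(4) by (simp add: f_def)
  ultimately have bound: "\<bar>f 0 t\<bar> \<le> R ^ M / fact M * (card I * A * W ^ M * exp (W * R))"
    using interpolation_error_bound[of f Z 0 R M] Z t(1) by simp
  obtain d num where "0 < d" "d \<le> D" and num: "\<forall>q\<in>I. real d * exp (lam q * t) = real (num q)"
    using t(2) unfolding exp_values_height_le_def by metis
  have int: "real d * f 0 t = real_of_int (\<Sum>q\<in>I. a q * int (num q))"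
    unfolding f_def sum_distrib_left of_int_sum
  proof (rule sum.cong[OF refl])
    fix q assume "q \<in> I"
    then show "real d * (a q * lam q ^ 0 * exp (lam q * t)) = real_of_int (a q * int (num q))"
      using num by (simp flip: of_nat_mult)
  qed
  have "\<bar>real d * f 0 t\<bar> \<le> D * \<bar>f 0 t\<bar>"
    using \<open>d \<le> D\<close> by (simp add: abs_mult mult_right_mono)
  also have "\<dots> < 1"
    using bound small \<open>d \<le> D\<close> \<open>0 < d\<close>
    by (meson le_less_trans mult_left_mono of_nat_0_le_iff)
  finally have "(\<Sum>q\<in>I. a q * int (num q)) = 0"
    unfolding int by linarith \<comment> \<open>an integer of absolute value less than 1\<close>
  then show ?thesis
    using int \<open>0 < d\<close> by (simp add: f_def)
qed

lemma card_points_small_height_less: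
  fixes lam :: "'q \<Rightarrow> real" and Z T :: "real set" and W R :: real
  assumes I: "finite I" "I \<noteq> {}" "inj_on lam I" "\<forall>q\<in>I. 0 \<le> lam q \<and> lam q \<le> W"
    and Z: "finite Z" "2 * card Z \<le> card I" "1 \<le> D" "\<forall>t\<in>Z. exp_values_height_le lam I t D"
      "Z \<subseteq> {0..R}"
    and T: "finite T" "T \<subseteq> {0..R}" "\<forall>t\<in>T. exp_values_height_le lam I t E"
    and small: "E * (R ^ card Z / fact (card Z) *
      (card I * real (2 * card I * D) * W ^ card Z * exp (W * R))) < 1"
  shows "card T < card I"
proof -
  obtain a :: "'q \<Rightarrow> int" where a: "\<exists>q\<in>I. a q \<noteq> 0" "\<forall>q\<in>I. \<bar>a q\<bar> \<le> int (2 * card I * D)"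
    "\<forall>t\<in>Z. (\<Sum>q\<in>I. a q * exp (lam q * t)) = 0"
    using exists_int_exp_sum_vanishing[OF I(1,2) Z(1-4)] by blast
  have "\<forall>q\<in>I. real_of_int \<bar>a q\<bar> \<le> real (2 * card I * D)"
    using a(2) by (metis of_int_le_iff of_int_of_nat_eq)
  then have "\<forall>t\<in>T. (\<Sum>q\<in>I. a q * exp (lam q * t)) = 0"
    using exp_sum_zero_extrapolation[OF I(1) _ I(4) Z(1,5) refl a(3) _ _ small] T(2,3) by blast
  then show ?thesis
    using card_zeros_exp_sum_less[of I lam "\<lambda>q. real_of_int (a q)" T] I(1,3) a(1) T(1) by simp
qed

lemma inj_add_mult_irrational:
  fixes c :: real
  assumes "c \<notin> \<rat>"
  shows "inj (\<lambda>(k::nat, l::nat). real k + real l * c)"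
proof (rule injI, clarify)
  fix k l k' l' :: nat
  assume eq: "real k + real l * c = real k' + real l' * c"
  show "k = k' \<and> l = l'"
  proof (cases "l = l'")
    case False
    then have "c = (real k' - real k) / (real l - real l')"
      using eq by (simp add: field_simps)
    then show ?thesis
      using assms by simp
  qed (use eq in simp)
qed

lemma add_mult_le_bound:
  fixes c :: real
  assumes "0 \<le> c" "k < K" "l < K"
  shows "0 \<le> real k + real l * c \<and> real k + real l * c \<le> real K * (1 + c)"
proof -
  have "real l * c \<le> real K * c" "0 \<le> real l * c" "real k \<le> real K"
    using assms by (auto intro: mult_right_mono)
  then show ?thesis
    by (simp add: algebra_simps)
qed

lemma Rats_pos_nat_fraction:
  fixes x :: real
  assumes "x \<in> \<rat>" "0 < x"
  obtains m n :: nat where "0 < n" "x = m / n"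
  using Rats_abs_nat_div_natE[OF assms(1)] assms(2) by (metis abs_of_pos neq0_conv)

definition rat_height_le :: "real \<Rightarrow> nat \<Rightarrow> bool" where
  "rat_height_le x H \<longleftrightarrow> (\<exists>(p::nat) (q::nat). 0 < q \<and> p \<le> H \<and> q \<le> H \<and> x = p / q)"

lemma rat_height_le_imp_le:
  assumes "rat_height_le x H"
  shows "x \<le> H"
proof -
  obtain p q :: nat where "0 < q" "p \<le> H" "x = p / q"
    using assms unfolding rat_height_le_def by blast
  then have "x \<le> p"
    by (simp add: divide_le_eq mult_le_cancel_left1)
  then show ?thesis
    using \<open>p \<le> H\<close> by simp
qed

lemma exists_rat_height_bound:
  fixes X :: "real set"
  assumes "finite X" "\<forall>x\<in>X. x \<in> \<rat> \<and> 0 < x"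
  obtains H where "2 \<le> H" "\<forall>x\<in>X. rat_height_le x H"
proof -
  have "eventually (rat_height_le x) sequentially" if "x \<in> X" for x
  proof -
    have "x \<in> \<rat>" "0 < x"
      using assms(2) that by auto
    then obtain m n :: nat where "0 < n" "x = m / n"
      by (rule Rats_pos_nat_fraction)
    then show ?thesis
      unfolding rat_height_le_def eventually_sequentially by (intro exI[of _ "max m n"]) auto
  qed
  then have "eventually (\<lambda>H. 2 \<le> H \<and> (\<forall>x\<in>X. rat_height_le x H)) sequentially"
    using assms(1) by (intro eventually_conj eventually_ge_at_top eventually_ball_finite) auto
  then show thesis
    using that unfolding eventually_sequentially by blast
qed

definition lattice_points :: "'j set \<Rightarrow> ('j \<Rightarrow> real) \<Rightarrow> nat \<Rightarrow> real set" where
  "lattice_points J y S = (\<lambda>s. \<Sum>j\<in>J. real (s j) * y j) ` (J \<rightarrow>\<^sub>E {..<S})"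

lemma finite_lattice_points: "finite J \<Longrightarrow> finite (lattice_points J y S)"
  by (simp add: lattice_points_def finite_PiE)

lemma card_lattice_points:
  assumes "finite J" "inj_on (\<lambda>s. \<Sum>j\<in>J. real (s j) * y j) (J \<rightarrow>\<^sub>E UNIV)"
  shows "card (lattice_points J y S) = S ^ card J"
proof -
  have "inj_on (\<lambda>s. \<Sum>j\<in>J. real (s j) * y j) (J \<rightarrow>\<^sub>E {..<S})"
    using assms(2) by (rule inj_on_subset) (auto simp: PiE_iff)
  then show ?thesis
    using assms(1) by (simp add: lattice_points_def card_image card_PiE)
qed

lemma lattice_points_subset:
  assumes "\<forall>j\<in>J. 0 \<le> y j \<and> y j \<le> L"
  shows "lattice_points J y S \<subseteq> {0..real (card J) * real S * L}"
proof (clarsimp simp: lattice_points_def)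
  fix s assume s: "s \<in> J \<rightarrow>\<^sub>E {..<S}"
  have "(\<Sum>j\<in>J. real (s j) * y j) \<le> (\<Sum>j\<in>J. real S * L)"
    using s assms by (intro sum_mono mult_mono) (auto simp: PiE_iff less_imp_le)
  moreover have "0 \<le> (\<Sum>j\<in>J. real (s j) * y j)"
    using assms by (intro sum_nonneg) auto
  ultimately show "0 \<le> (\<Sum>j\<in>J. real (s j) * y j) \<and> (\<Sum>j\<in>J. real (s j) * y j) \<le> real (card J) * real S * L"
    by (simp add: mult.assoc)
qed

lemma exp_lattice_monomial:
  fixes p q u v :: nat and x c :: real
  assumes "0 < q" "0 < v" "exp x = p / q" "exp (c * x) = u / v" "k \<le> K" "l \<le> K"
  shows "real (q ^ (K * e) * v ^ (K * e)) * exp ((real k + real l * c) * (real e * x)) =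
    real (p ^ (k * e) * q ^ ((K - k) * e) * u ^ (l * e) * v ^ ((K - l) * e))"
proof -
  have "exp ((real k + real l * c) * (real e * x)) = exp x ^ (k * e) * exp (c * x) ^ (l * e)"
    by (simp add: exp_add algebra_simps flip: exp_of_nat_mult)
  moreover have "K * e = k * e + (K - k) * e" "K * e = l * e + (K - l) * e"
    using assms(5,6) by (simp_all flip: add_mult_distrib)
  then have "real (q ^ (K * e) * v ^ (K * e)) =
      real q ^ (k * e) * real q ^ ((K - k) * e) * (real v ^ (l * e) * real v ^ ((K - l) * e))"
    by (metis of_nat_mult of_nat_power power_add)
  ultimately show ?thesis
    using assms(1-4) by (simp add: power_divide field_simps)
qed

lemma exp_values_height_le_lattice_points:
  fixes y :: "'j \<Rightarrow> real" and c :: real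
  assumes "finite J" "1 \<le> H"
    and height: "\<forall>j\<in>J. rat_height_le (exp (y j)) H \<and> rat_height_le (exp (c * y j)) H"
    and t: "t \<in> lattice_points J y S"
  shows "exp_values_height_le (\<lambda>(k, l). real k + real l * c) ({..<K} \<times> {..<K}) t
           (H ^ (4 * card J * K * S))"
proof -
  obtain P Q U V :: "'j \<Rightarrow> nat" where PQUV: "\<forall>j\<in>J. 0 < Q j \<and> 0 < V j \<and>
      P j \<le> H \<and> Q j \<le> H \<and> U j \<le> H \<and> V j \<le> H \<and> exp (y j) = P j / Q j \<and> exp (c * y j) = U j / V j"
    using height unfolding rat_height_le_def by metis
  obtain s where s: "\<forall>j\<in>J. s j < S" and t_eq: "t = (\<Sum>j\<in>J. real (s j) * y j)"
    using t by (auto simp: lattice_points_def PiE_iff)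
  define d where "d = (\<Prod>j\<in>J. Q j ^ ((K - 1) * s j) * V j ^ ((K - 1) * s j))"
  define num where "num k l = (\<Prod>j\<in>J. P j ^ (k * s j) * Q j ^ ((K - 1 - k) * s j) *
    U j ^ (l * s j) * V j ^ ((K - 1 - l) * s j))" for k l
  have pow_le: "x ^ e \<le> H ^ (K * S)" if "x \<le> H" "e \<le> K * S" for x e
    by (meson \<open>1 \<le> H\<close> order_trans power_increasing power_mono zero_le that)
  have s_le: "\<forall>j\<in>J. s j \<le> S"
    using s by (simp add: less_imp_le)
  have exponent_le: "e * s j \<le> K * S" if "e \<le> K" "j \<in> J" for e j
    using s_le that by (simp add: mult_le_mono)
  have "0 < d"
    using PQUV unfolding d_def by (intro prod_pos) simp
  moreover have "d \<le> H ^ (4 * card J * K * S)"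
  proof -
    have "d \<le> (\<Prod>j\<in>J. H ^ (K * S) * H ^ (K * S))"
      unfolding d_def using PQUV exponent_le s_le by (intro prod_mono) (auto intro!: mult_le_mono pow_le)
    also have "\<dots> = H ^ (2 * card J * K * S)"
      by (simp add: power2_eq_square[symmetric] power_mult[symmetric] mult_ac)
    also have "\<dots> \<le> H ^ (4 * card J * K * S)"
      using \<open>1 \<le> H\<close> by (intro power_increasing) auto
    finally show ?thesis .
  qed
  moreover have "num k l \<le> H ^ (4 * card J * K * S)" if "k < K" "l < K" for k l
  proof -
    have "num k l \<le> (\<Prod>j\<in>J. H ^ (K * S) * H ^ (K * S) * H ^ (K * S) * H ^ (K * S))"
      unfolding num_def using PQUV exponent_le s_le that by (intro prod_mono) (auto intro!: mult_le_mono pow_le)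
    also have "\<dots> = H ^ (4 * card J * K * S)"
      by (simp only: power4_eq_xxxx[symmetric] power_mult[symmetric] prod_constant) (simp add: mult_ac)
    finally show ?thesis .
  qed
  moreover have "real d * exp ((real k + real l * c) * t) = real (num k l)" if "k < K" "l < K" for k l
    using PQUV that exp_lattice_monomial[of "Q j" "V j" "y j" "P j" c "U j" k "K - 1" l "s j" for j]
    by (simp add: t_eq d_def num_def sum_distrib_left exp_sum \<open>finite J\<close> flip: prod.distrib)
  ultimately show ?thesis
    unfolding exp_values_height_le_def by (intro exI[of _ d]) auto
qed

lemma eventually_smallness_bound:
  fixes H :: nat and C :: real
  assumes "2 \<le> H" "0 < C"
  shows "eventually (\<lambda>n. real H ^ (72 * n^5) * (32 * real n^12) * exp (C * real n^5) *
    (exp 1 * C / real n) ^ n^6 < 1) sequentially"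
proof -
  define g where "g x = H powr (72 * x^5) * (32 * x^12) * exp (C * x^5) * (exp 1 * C / x) powr (x^6)"
    for x :: real
  have "(g \<longlongrightarrow> 0) at_top"
    unfolding g_def using assms by real_asymp
  then have "eventually (\<lambda>x. g x < 1) at_top"
    by (rule order_tendstoD) simp
  then have "eventually (\<lambda>n. g (real n) < 1) sequentially"
    using eventually_compose_filterlim filterlim_real_sequentially by blast
  moreover have "eventually (\<lambda>n. 1 \<le> n) sequentially"
    by (rule eventually_ge_at_top)
  ultimately show ?thesis
  proof eventually_elim
    case (elim n)
    have "H powr (72 * real n^5) = real H ^ (72 * n^5)"
      using powr_realpow[of "real H" "72 * n^5"] assms by simp
    moreover have "(exp 1 * C / real n) powr (real n^6) = (exp 1 * C / real n) ^ n^6"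
      using powr_realpow[of "exp 1 * C / real n" "n^6"] assms elim(2) by simp
    ultimately show ?case
      using elim(1) by (simp only: g_def)
  qed
qed

(* The smallness hypothesis of card_points_small_height_less for the frequencies k + l c with
   k, l < 2 n^3, zeros at the lattice points with s_j < n^2, targets at those with s_j < 2 n^2,
   radius 3 (2 n^2) ln H and heights from exp_values_height_le_lattice_points. *)
lemma exists_parameter_smallness:
  fixes H :: nat and c :: real
  assumes "2 \<le> H" "0 < c"
  obtains n :: nat where "1 \<le> n"
    "real (H ^ (12 * (2 * n^3) * (2 * n^2))) * ((3 * real (2 * n^2) * ln H) ^ n^6 / fact (n^6) *
      (real (4 * n^6) * real (2 * (4 * n^6) * H ^ (12 * (2 * n^3) * n^2)) *
       (real (2 * n^3) * (1 + c)) ^ n^6 * exp (real (2 * n^3) * (1 + c) * (3 * real (2 * n^2) * ln H)))) < 1"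
proof -
  define L where "L = ln (real H)"
  define C where "C = 12 * (1 + c) * L"
  have "0 < C"
    using assms by (simp add: L_def C_def)
  obtain n where "1 \<le> n" and bound: "real H ^ (72 * n^5) * (32 * real n^12) * exp (C * real n^5) *
      (exp 1 * C / real n) ^ n^6 < 1"
    using eventually_conj[OF eventually_ge_at_top[of 1] eventually_smallness_bound[OF assms(1) \<open>0 < C\<close>]]
    unfolding eventually_sequentially by blast
  have exponents: "12 * (2 * n^3) * (2 * n^2) = 48 * n^5" "12 * (2 * n^3) * n^2 = 24 * n^5"
    by (simp_all flip: power_add)
  have "real n ^ 2 * real n ^ 3 = real n ^ 5" "real n ^ 6 * real n ^ 6 = real n ^ 12"
    by (simp_all flip: power_add)
  then have base: "3 * (2 * real n^2) * L * (2 * real n^3 * (1 + c)) = C * real n^5"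
    and exponent: "2 * real n^3 * (1 + c) * (3 * (2 * real n^2) * L) = C * real n^5"
    and factor: "4 * real n^6 * (2 * (4 * real n^6)) = 32 * real n^12"
    by (simp_all add: C_def algebra_simps)
  have "real H ^ (48 * n^5) * real H ^ (24 * n^5) = real H ^ (72 * n^5)"
    by (simp flip: power_add)
  moreover have "real H ^ (48 * n^5) * ((3 * (2 * real n^2) * L) ^ n^6 / fact (n^6) *
      (4 * real n^6 * (2 * (4 * real n^6) * real H ^ (24 * n^5)) * (2 * real n^3 * (1 + c)) ^ n^6 *
       exp (2 * real n^3 * (1 + c) * (3 * (2 * real n^2) * L))))
    = (real H ^ (48 * n^5) * real H ^ (24 * n^5)) * (4 * real n^6 * (2 * (4 * real n^6))) *
      exp (2 * real n^3 * (1 + c) * (3 * (2 * real n^2) * L)) *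
      ((3 * (2 * real n^2) * L) ^ n^6 * (2 * real n^3 * (1 + c)) ^ n^6 / fact (n^6))"
    by (simp add: mult_ac)
  ultimately have "real (H ^ (12 * (2 * n^3) * (2 * n^2))) * ((3 * real (2 * n^2) * L) ^ n^6 / fact (n^6) *
      (real (4 * n^6) * real (2 * (4 * n^6) * H ^ (12 * (2 * n^3) * n^2)) *
       (real (2 * n^3) * (1 + c)) ^ n^6 * exp (real (2 * n^3) * (1 + c) * (3 * real (2 * n^2) * L))))
    = real H ^ (72 * n^5) * (32 * real n^12) * exp (C * real n^5) * ((C * real n^5) ^ n^6 / fact (n^6))"
    (is "?lhs = _")
    by (simp only: exponents of_nat_mult of_nat_power of_nat_numeral base exponent factor
        flip: power_mult_distrib)
  also have "\<dots> \<le> real H ^ (72 * n^5) * (32 * real n^12) * exp (C * real n^5) *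
      (exp 1 * (C * real n^5) / real (n^6)) ^ n^6"
    using \<open>0 < C\<close> \<open>1 \<le> n\<close> by (intro mult_left_mono power_div_fact_le) auto
  also have "exp 1 * (C * real n^5) / real (n^6) = exp 1 * C / real n"
    using \<open>1 \<le> n\<close> by (simp add: field_simps power_eq_if)
  finally have "?lhs < 1"
    using bound by linarith
  then show thesis
    using that \<open>1 \<le> n\<close> unfolding L_def by blast
qed

lemma six_exponentials_rational:
  fixes c :: real and y :: "nat \<Rightarrow> real"
  assumes c: "0 < c" "c \<notin> \<rat>"
    and y: "\<And>j. j < 3 \<Longrightarrow> 0 < y j \<and> exp (y j) \<in> \<rat> \<and> exp (c * y j) \<in> \<rat>"
    and indep: "inj_on (\<lambda>s. \<Sum>j<3. real (s j) * y j) ({..<3} \<rightarrow>\<^sub>E UNIV)"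
  shows False
proof -
  obtain H where "2 \<le> H" and height: "\<forall>x \<in> (\<lambda>j. exp (y j)) ` {..<3} \<union> (\<lambda>j. exp (c * y j)) ` {..<3}.
      rat_height_le x H"
    by (rule exists_rat_height_bound[of "(\<lambda>j. exp (y j)) ` {..<3} \<union> (\<lambda>j. exp (c * y j)) ` {..<3}"])
      (use y in auto)
  define L where "L = ln (real H)"
  have y_L: "\<forall>j\<in>{..<3}. 0 \<le> y j \<and> y j \<le> L"
    using y height rat_height_le_imp_le \<open>2 \<le> H\<close> by (auto simp: L_def ln_ge_iff less_imp_le)
  obtain n where "1 \<le> n" and small:
    "real (H ^ (12 * (2 * n^3) * (2 * n^2))) * ((3 * real (2 * n^2) * L) ^ n^6 / fact (n^6) *
      (real (4 * n^6) * real (2 * (4 * n^6) * H ^ (12 * (2 * n^3) * n^2)) *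
       (real (2 * n^3) * (1 + c)) ^ n^6 * exp (real (2 * n^3) * (1 + c) * (3 * real (2 * n^2) * L)))) < 1"
    using exists_parameter_smallness[OF \<open>2 \<le> H\<close> c(1)] unfolding L_def by blast
  define K S0 S1 where "K = 2 * n^3" and "S0 = n^2" and "S1 = 2 * n^2"
  define I lam where "I = {..<K} \<times> {..<K}" and "lam = (\<lambda>(k, l). real k + real l * c)"
  define Z T where "Z = lattice_points {..<3} y S0" and "T = lattice_points {..<3} y S1"
  have "card Z = n^6" "card T = 8 * n^6" "card I = 4 * n^6"
    using card_lattice_points[OF finite_lessThan indep]
    by (simp_all add: Z_def T_def I_def S0_def S1_def K_def power_mult_distrib flip: power_mult)
  have "card T < card I"
  proof (rule card_points_small_height_less[where lam = lam and W = "real K * (1 + c)"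
        and R = "3 * real S1 * L" and D = "H ^ (12 * K * S0)" and E = "H ^ (12 * K * S1)"])
    show "I \<noteq> {}"
      using \<open>1 \<le> n\<close> by (simp add: I_def K_def lessThan_empty_iff)
    show "inj_on lam I" "\<forall>q\<in>I. 0 \<le> lam q \<and> lam q \<le> real K * (1 + c)"
      using inj_on_subset[OF inj_add_mult_irrational[OF c(2)]] add_mult_le_bound c(1)
      by (auto simp: I_def lam_def)
    have "Z \<subseteq> {0..3 * real S0 * L}" "T \<subseteq> {0..3 * real S1 * L}" "0 \<le> L"
      using lattice_points_subset[OF y_L] \<open>2 \<le> H\<close> by (auto simp: Z_def T_def L_def)
    then show "Z \<subseteq> {0..3 * real S1 * L}" "T \<subseteq> {0..3 * real S1 * L}"
      by (force simp: S0_def S1_def intro: mult_right_mono)+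
    have "\<forall>j\<in>{..<3::nat}. rat_height_le (exp (y j)) H \<and> rat_height_le (exp (c * y j)) H"
      using height by auto
    then show "\<forall>t\<in>Z. exp_values_height_le lam I t (H ^ (12 * K * S0))"
      "\<forall>t\<in>T. exp_values_height_le lam I t (H ^ (12 * K * S1))"
      unfolding Z_def T_def I_def lam_def
      using exp_values_height_le_lattice_points[of "{..<3::nat}" H y c] \<open>2 \<le> H\<close> by auto
    show "real (H ^ (12 * K * S1)) * ((3 * real S1 * L) ^ card Z / fact (card Z) *
        (real (card I) * real (2 * card I * H ^ (12 * K * S0)) *
         (real K * (1 + c)) ^ card Z * exp (real K * (1 + c) * (3 * real S1 * L)))) < 1"
      using small unfolding \<open>card Z = n^6\<close> \<open>card I = 4 * n^6\<close> K_def S0_def S1_def .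
  qed (use \<open>2 \<le> H\<close> \<open>card Z = n^6\<close> \<open>card I = 4 * n^6\<close> in
      \<open>simp_all add: I_def Z_def T_def finite_lattice_points\<close>)
  then show False
    using \<open>card T = 8 * n^6\<close> \<open>card I = 4 * n^6\<close> by simp
qed

lemma prime_ratio_powr_notin_Rats_of_rational_exponent:
  fixes c :: real and p q :: nat
  assumes c: "0 < c" "c \<in> \<rat>" "c \<notin> \<int>" and pq: "prime p" "prime q" "p \<noteq> q"
  shows "(real p / real q) powr c \<notin> \<rat>"
proof
  assume rat: "(real p / real q) powr c \<in> \<rat>"
  have "0 < real p / real q"
    using pq by (simp add: prime_gt_0_nat)
  then have pos: "0 < (real p / real q) powr c"
    by (simp only: powr_gt_zero)
  from rat pos obtain m n :: nat where "0 < n" and mn: "(real p / real q) powr c = m / n"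
    by (rule Rats_pos_nat_fraction)
  obtain a b :: int where "0 < b" "coprime a b" "c = a / b"
    using Rats_cases'[OF c(2)] by blast
  then have "0 < a" "b \<noteq> 1"
    using c by (auto simp: zero_less_divide_iff)
  define A B where "A = nat a" and "B = nat b"
  have "coprime A B" "B \<noteq> 1" "c * B = A"
    using \<open>0 < a\<close> \<open>0 < b\<close> \<open>coprime a b\<close> \<open>b \<noteq> 1\<close> \<open>c = a / b\<close>
    by (auto simp: A_def B_def coprime_int_iff[symmetric])
  have "(real m / real n) ^ B = ((real p / real q) powr c) powr B"
    unfolding mn[symmetric] using pos by (rule powr_realpow[symmetric])
  also have "\<dots> = (real p / real q) ^ A"
    using \<open>0 < real p / real q\<close> \<open>c * B = A\<close> by (simp add: powr_powr powr_realpow)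
  finally have "(real m / real n) ^ B = (real p / real q) ^ A" .
  then have "real (m ^ B * q ^ A) = real (p ^ A * n ^ B)"
    using \<open>0 < n\<close> pq by (simp add: power_divide field_simps prime_gt_0_nat)
  then have eq: "m ^ B * q ^ A = p ^ A * n ^ B"
    by (simp only: of_nat_eq_iff)
  have "m \<noteq> 0"
    using mn pos by (metis div_0 less_irrefl of_nat_0)
  have "B * multiplicity p m = A + B * multiplicity p n"
    using arg_cong[OF eq, of "multiplicity p"] pq \<open>m \<noteq> 0\<close> \<open>0 < n\<close>
    by (simp add: prime_elem_multiplicity_mult_distrib prime_elem_multiplicity_power_distrib
        prime_multiplicity_other prime_gt_0_nat)
  then have "B dvd A"
    by (metis dvd_add_left_iff dvd_triv_left)
  then show False
    using \<open>coprime A B\<close> \<open>B \<noteq> 1\<close> by (metis coprime_common_divisor_nat dvd_refl)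
qed

lemma Rats_powr_divide_swap:
  fixes x y c :: real
  assumes "0 < x" "0 < y"
  shows "(y / x) powr c \<in> \<rat> \<longleftrightarrow> (x / y) powr c \<in> \<rat>"
proof -
  have "(y / x) powr c = inverse ((x / y) powr c)"
    using assms by (simp add: powr_divide)
  then show ?thesis
    by simp
qed

lemma multiplicity_prod_prime_powers_inj:
  fixes P :: "'j \<Rightarrow> nat"
  assumes "finite J" "\<forall>j\<in>J. prime (P j)" "inj_on P J" "i \<in> J"
  shows "multiplicity (P i) (\<Prod>j\<in>J. P j ^ u j) = u i"
proof -
  have "(\<Prod>j\<in>J. P j ^ u j) = (\<Prod>p\<in>P ` J. p ^ u (the_inv_into J P p))"
    using assms(3) by (simp add: prod.reindex the_inv_into_f_f)
  also have "multiplicity (P i) \<dots> = u (the_inv_into J P (P i))"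
    using assms by (subst multiplicity_prod_prime_powers) auto
  also have "\<dots> = u i"
    using assms(3,4) by (simp add: the_inv_into_f_f)
  finally show ?thesis .
qed

lemma multiplicity_prod_prime_powers_other:
  fixes Q :: "'j \<Rightarrow> nat"
  assumes "finite J" "\<forall>j\<in>J. prime (Q j) \<and> Q j \<noteq> p" "prime p"
  shows "multiplicity p (\<Prod>j\<in>J. Q j ^ v j) = 0"
proof -
  have "\<not> p dvd Q j ^ v j" if "j \<in> J" for j
  proof
    assume "p dvd Q j ^ v j"
    then have "p dvd Q j"
      using \<open>prime p\<close> prime_dvd_power by blast
    then show False
      using assms that primes_dvd_imp_eq by blast
  qed
  then have "\<not> p dvd (\<Prod>j\<in>J. Q j ^ v j)"
    using assms by (subst prime_dvd_prod_iff) auto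
  then show ?thesis
    by (rule not_dvd_imp_multiplicity_0)
qed

lemma inj_on_sum_ln_prime_ratios:
  fixes P Q :: "'j \<Rightarrow> nat"
  assumes "finite J" and prime: "\<forall>j\<in>J. prime (P j) \<and> prime (Q j)"
    and "inj_on P J" and disjoint: "\<forall>i\<in>J. \<forall>j\<in>J. P i \<noteq> Q j"
  shows "inj_on (\<lambda>s. \<Sum>j\<in>J. real (s j) * ln (real (P j) / real (Q j))) (J \<rightarrow>\<^sub>E UNIV)"
proof (rule inj_onI)
  fix s t :: "'j \<Rightarrow> nat"
  assume st: "s \<in> J \<rightarrow>\<^sub>E UNIV" "t \<in> J \<rightarrow>\<^sub>E UNIV"
    and eq: "(\<Sum>j\<in>J. real (s j) * ln (real (P j) / real (Q j))) =
             (\<Sum>j\<in>J. real (t j) * ln (real (P j) / real (Q j)))"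
  define N where "N u v = (\<Prod>j\<in>J. P j ^ u j) * (\<Prod>j\<in>J. Q j ^ v j)" for u v :: "'j \<Rightarrow> nat"
  have pos: "0 < P j" "0 < Q j" if "j \<in> J" for j
    using prime that by (auto simp: prime_gt_0_nat)
  have exp_eq: "exp (\<Sum>j\<in>J. real (u j) * ln (real (P j) / real (Q j))) =
      (\<Prod>j\<in>J. real (P j) ^ u j) / (\<Prod>j\<in>J. real (Q j) ^ u j)" for u :: "'j \<Rightarrow> nat"
    using pos by (simp add: exp_sum \<open>finite J\<close> exp_of_nat_mult power_divide prod_dividef)
  have "(\<Prod>j\<in>J. real (Q j) ^ u j) \<noteq> 0" for u :: "'j \<Rightarrow> nat"
    using pos \<open>finite J\<close> by simp
  then have "real (N s t) = real (N t s)"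
    using arg_cong[OF eq, of exp] unfolding exp_eq N_def by (simp add: frac_eq_eq)
  then have "N s t = N t s"
    by (simp only: of_nat_eq_iff)
  have multiplicity_N: "multiplicity (P i) (N u v) = u i" if "i \<in> J" for i u v
  proof -
    have "multiplicity (P i) (\<Prod>j\<in>J. P j ^ u j) = u i"
      using assms that by (intro multiplicity_prod_prime_powers_inj) auto
    moreover have "\<forall>j\<in>J. prime (Q j) \<and> Q j \<noteq> P i"
      using prime disjoint that by metis
    then have "multiplicity (P i) (\<Prod>j\<in>J. Q j ^ v j) = 0"
      using prime that \<open>finite J\<close> by (intro multiplicity_prod_prime_powers_other) auto
    ultimately show ?thesis
      using pos prime that
      by (simp add: N_def prime_elem_multiplicity_mult_distrib prod_pos less_not_refl2)
  qed
  show "s = t"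
    using \<open>N s t = N t s\<close> multiplicity_N by (metis PiE_ext st)
qed

lemma obtain_interleaved_pairs:
  assumes "\<forall>N::nat. \<exists>p q. R p q \<and> N < q \<and> q < p"
  obtains P Q :: "nat \<Rightarrow> nat"
  where "\<And>j. R (P j) (Q j)" "\<And>j. Q j < P j" "strict_mono P" "\<And>i j. P i \<noteq> Q j"
proof -
  have "\<forall>N. \<exists>pq. R (fst pq) (snd pq) \<and> N < snd pq \<and> snd pq < fst pq"
    using assms by auto
  then obtain f where f: "\<And>N. R (fst (f N)) (snd (f N)) \<and> N < snd (f N) \<and> snd (f N) < fst (f N)"
    by metis
  define g where "g = rec_nat (f 0) (\<lambda>_ pq. f (fst pq))"
  define P Q where "P j = fst (g j)" and "Q j = snd (g j)" for j
  have "R (P j) (Q j) \<and> Q j < P j" for j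
  proof -
    obtain N where "g j = f N"
      by (cases j) (auto simp: g_def)
    then show ?thesis
      using f[of N] by (simp add: P_def Q_def)
  qed
  moreover have "P j < Q (Suc j)" for j
    using f[of "P j"] by (simp add: P_def Q_def g_def)
  ultimately have PQ: "R (P j) (Q j)" "Q j < P j" "P j < Q (Suc j)" for j
    by blast+
  have "strict_mono P"
    using PQ by (meson order.strict_trans strict_mono_Suc_iff)
  have "strict_mono Q"
    using PQ by (meson order.strict_trans strict_mono_Suc_iff)
  have "P i \<noteq> Q j" for i j
  proof (cases "i < j")
    case True
    then have "P i < Q (Suc i)" "Q (Suc i) \<le> Q j"
      using PQ \<open>strict_mono Q\<close> by (auto simp: strict_mono_less_eq)
    then show ?thesis
      by simp
  next
    case False
    then have "Q j < P j" "P j \<le> P i"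
      using PQ \<open>strict_mono P\<close> by (auto simp: strict_mono_less_eq)
    then show ?thesis
      by simp
  qed
  then show thesis
    using that PQ(1,2) \<open>strict_mono P\<close> by blast
qed

lemma prime_ratio_powr_notin_Rats_of_irrational_exponent:
  fixes c :: real
  assumes "0 < c" "c \<notin> \<rat>"
  shows "\<exists>N::nat. \<forall>p q. prime p \<longrightarrow> prime q \<longrightarrow> p \<noteq> q \<longrightarrow> N < p \<longrightarrow> N < q \<longrightarrow>
    (real p / real q) powr c \<notin> \<rat>"
proof (rule ccontr)
  assume neg: "\<not> ?thesis"
  define bad where "bad p q \<longleftrightarrow> prime p \<and> prime q \<and> (real p / real q) powr c \<in> \<rat>" for p q :: nat
  have "\<exists>p q. bad p q \<and> N < q \<and> q < p" for N :: nat
  proof -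
    obtain p q :: nat where pq: "prime p" "prime q" "p \<noteq> q" "N < p" "N < q"
      "(real p / real q) powr c \<in> \<rat>"
      using neg by blast
    then have "bad p q" "bad q p"
      using Rats_powr_divide_swap[of "real p" "real q" c] by (simp_all add: bad_def prime_gt_0_nat)
    show ?thesis
    proof (cases "q < p")
      case True
      then show ?thesis
        using \<open>bad p q\<close> pq(5) by (intro exI[of _ p] exI[of _ q]) simp
    next
      case False
      then show ?thesis
        using \<open>bad q p\<close> pq(3,4) by (intro exI[of _ q] exI[of _ p]) simp
    qed
  qed
  then obtain P Q :: "nat \<Rightarrow> nat"
    where PQ: "\<And>j. bad (P j) (Q j)" "\<And>j. Q j < P j" "strict_mono P" "\<And>i j. P i \<noteq> Q j"
    using obtain_interleaved_pairs[of bad] by blast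
  define y where "y j = ln (real (P j) / real (Q j))" for j
  have "0 < y j \<and> exp (y j) \<in> \<rat> \<and> exp (c * y j) \<in> \<rat>" for j
  proof -
    have "0 < Q j" "Q j < P j" "(real (P j) / real (Q j)) powr c \<in> \<rat>"
      using PQ(1,2)[of j] by (auto simp: bad_def prime_gt_0_nat)
    then show ?thesis
      by (simp add: y_def powr_def)
  qed
  moreover have "inj_on (\<lambda>s. \<Sum>j<3. real (s j) * y j) ({..<3} \<rightarrow>\<^sub>E UNIV)"
    unfolding y_def using PQ(1,3,4) strict_mono_imp_inj_on
    by (intro inj_on_sum_ln_prime_ratios) (auto simp: bad_def)
  ultimately show False
    by (rule six_exponentials_rational[OF assms])
qed

theorem lemma3:
  fixes c :: real
  assumes "c > 0" and "c \<notin> \<int>"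
  shows "\<exists>L::real. L > 0 \<and>
           (\<forall>p q :: nat. prime p \<longrightarrow> prime q \<longrightarrow> p \<noteq> q \<longrightarrow>
              real p > L \<longrightarrow> real q > L \<longrightarrow>
              (real p / real q) powr c \<notin> \<rat>)"
proof (cases "c \<in> \<rat>")
  case True
  then show ?thesis
    using prime_ratio_powr_notin_Rats_of_rational_exponent assms by (intro exI[of _ 1]) auto
next
  case False
  then obtain N :: nat where "\<forall>p q. prime p \<longrightarrow> prime q \<longrightarrow> p \<noteq> q \<longrightarrow> N < p \<longrightarrow> N < q \<longrightarrow>
      (real p / real q) powr c \<notin> \<rat>"
    using prime_ratio_powr_notin_Rats_of_irrational_exponent assms(1) by blast
  then show ?thesis
    by (intro exI[of _ "real N + 1"]) auto
qed

end
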